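(* Let $\mathcal G$ be a locally compact Hausdorff étale ample groupoid with compact metrizable unit space. Then $\mathcal G$ has groupoid strict comparison if and only if $\mathcal G$ has groupoid strict comparison for compact open sets.
   Context: Ample: basis of compact open bisections (bisection: subset of an open set on which $s,r$ restrict to homeomorphisms onto open subsets of $\mathcal G^{(0)}$). $M(\mathcal G)$: regular Borel probability measures on $\mathcal G^{(0)}$ with $\mu(s(U))=\mu(r(U))$ for measurable bisections $U$. For compact $K$ and open $V$ in $\mathcal G^{(0)}$, $K\prec_{\mathcal G}V$ means there are open bisections $A_1,\dots,A_n$ with $K\subseteq\bigcup s(A_i)$ and $r(A_i)$ pairwise disjoint subsets of $V$; for open $U,V$, $U\precsim_{\mathcal G}V$ means $K\prec_{\mathcal G}V$ for all compact $K\subseteq U$. Groupoid strict comparison: $U\precsim_{\mathcal G}V$ for all open $U,V\subseteq\mathcal G^{(0)}$ with $\mu(U)<\mu(V)$ for every $\mu\in M(\mathcal G)$. Groupoid strict comparison for compact open sets: the same condition required only for compact open $U,V\subseteq\mathcal G^{(0)}$. *)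

theory Defs
  imports "HOL-Probability.Probability"
begin

text \<open>A groupoid on the whole type 'g, given by source s, range r, partial
multiplication m (g h composable iff s g = r h) and inverse i.\<close>

definition groupoid :: "('g \<Rightarrow> 'g) \<Rightarrow> ('g \<Rightarrow> 'g) \<Rightarrow> ('g \<Rightarrow> 'g \<Rightarrow> 'g) \<Rightarrow> ('g \<Rightarrow> 'g) \<Rightarrow> bool" where
  "groupoid s r m i \<longleftrightarrow>
     (\<forall>g. s (s g) = s g \<and> r (s g) = s g \<and> s (r g) = r g \<and> r (r g) = r g) \<and>
     (\<forall>g h. s g = r h \<longrightarrow> s (m g h) = s h \<and> r (m g h) = r g) \<and>
     (\<forall>g h k. s g = r h \<longrightarrow> s h = r k \<longrightarrow> m (m g h) k = m g (m h k)) \<and>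
     (\<forall>g. m (r g) g = g \<and> m g (s g) = g) \<and>
     (\<forall>g. s (i g) = r g \<and> r (i g) = s g \<and> m g (i g) = r g \<and> m (i g) g = s g)"

definition unit_space :: "('g \<Rightarrow> 'g) \<Rightarrow> 'g set" where
  "unit_space s = range s"

definition topological_groupoid ::
  "('g::topological_space \<Rightarrow> 'g) \<Rightarrow> ('g \<Rightarrow> 'g) \<Rightarrow> ('g \<Rightarrow> 'g \<Rightarrow> 'g) \<Rightarrow> ('g \<Rightarrow> 'g) \<Rightarrow> bool" where
  "topological_groupoid s r m i \<longleftrightarrow> groupoid s r m i \<and>
     continuous_on UNIV s \<and> continuous_on UNIV r \<and> continuous_on UNIV i \<and>
     continuous_on {(g, h). s g = r h} (\<lambda>(g, h). m g h)"

definition bisection :: "('g::topological_space \<Rightarrow> 'g) \<Rightarrow> ('g \<Rightarrow> 'g) \<Rightarrow> 'g set \<Rightarrow> bool" where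
  "bisection s r U \<longleftrightarrow> (\<exists>V. open V \<and> U \<subseteq> V \<and>
     openin (top_of_set (unit_space s)) (s ` V) \<and>
     openin (top_of_set (unit_space s)) (r ` V) \<and>
     homeomorphic_map (top_of_set V) (top_of_set (s ` V)) s \<and>
     homeomorphic_map (top_of_set V) (top_of_set (r ` V)) r)"

definition open_bisection :: "('g::topological_space \<Rightarrow> 'g) \<Rightarrow> ('g \<Rightarrow> 'g) \<Rightarrow> 'g set \<Rightarrow> bool" where
  "open_bisection s r U \<longleftrightarrow> open U \<and> bisection s r U"

definition etale :: "('g::topological_space \<Rightarrow> 'g) \<Rightarrow> ('g \<Rightarrow> 'g) \<Rightarrow> bool" where
  "etale s r \<longleftrightarrow> (\<forall>g. \<exists>U. open U \<and> g \<in> U \<and>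
     open (s ` U) \<and> homeomorphic_map (top_of_set U) (top_of_set (s ` U)) s \<and>
     open (r ` U) \<and> homeomorphic_map (top_of_set U) (top_of_set (r ` U)) r)"

definition ample :: "('g::topological_space \<Rightarrow> 'g) \<Rightarrow> ('g \<Rightarrow> 'g) \<Rightarrow> bool" where
  "ample s r \<longleftrightarrow> (\<forall>W x. open W \<longrightarrow> x \<in> W \<longrightarrow>
     (\<exists>U. compact U \<and> open_bisection s r U \<and> x \<in> U \<and> U \<subseteq> W))"

definition regular_borel_prob :: "'g::topological_space set \<Rightarrow> 'g measure \<Rightarrow> bool" where
  "regular_borel_prob X \<mu> \<longleftrightarrow> prob_space \<mu> \<and> space \<mu> = X \<and>
     sets \<mu> = sets (restrict_space borel X) \<and>
     (\<forall>A \<in> sets \<mu>.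
        emeasure \<mu> A = (INF U \<in> {U. openin (top_of_set X) U \<and> A \<subseteq> U}. emeasure \<mu> U) \<and>
        emeasure \<mu> A = (SUP K \<in> {K. compact K \<and> K \<subseteq> A}. emeasure \<mu> K))"

definition invariant_measures :: "('g::topological_space \<Rightarrow> 'g) \<Rightarrow> ('g \<Rightarrow> 'g) \<Rightarrow> 'g measure set" where
  "invariant_measures s r = {\<mu>. regular_borel_prob (unit_space s) \<mu> \<and>
     (\<forall>U. U \<in> sets borel \<longrightarrow> bisection s r U \<longrightarrow> measure \<mu> (s ` U) = measure \<mu> (r ` U))}"

definition precedes :: "('g::topological_space \<Rightarrow> 'g) \<Rightarrow> ('g \<Rightarrow> 'g) \<Rightarrow> 'g set \<Rightarrow> 'g set \<Rightarrow> bool" where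
  "precedes s r K V \<longleftrightarrow> (\<exists>(n::nat) A. (\<forall>j<n. open_bisection s r (A j)) \<and>
     K \<subseteq> (\<Union>j<n. s ` A j) \<and> (\<forall>j<n. r ` A j \<subseteq> V) \<and>
     (\<forall>j<n. \<forall>k<n. j \<noteq> k \<longrightarrow> r ` A j \<inter> r ` A k = {}))"

definition subequiv :: "('g::topological_space \<Rightarrow> 'g) \<Rightarrow> ('g \<Rightarrow> 'g) \<Rightarrow> 'g set \<Rightarrow> 'g set \<Rightarrow> bool" where
  "subequiv s r U V \<longleftrightarrow> (\<forall>K. compact K \<longrightarrow> K \<subseteq> U \<longrightarrow> precedes s r K V)"

definition strict_comparison :: "('g::topological_space \<Rightarrow> 'g) \<Rightarrow> ('g \<Rightarrow> 'g) \<Rightarrow> bool" where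
  "strict_comparison s r \<longleftrightarrow> (\<forall>U V.
     openin (top_of_set (unit_space s)) U \<longrightarrow> openin (top_of_set (unit_space s)) V \<longrightarrow>
     (\<forall>\<mu> \<in> invariant_measures s r. measure \<mu> U < measure \<mu> V) \<longrightarrow> subequiv s r U V)"

definition strict_comparison_compact_open :: "('g::topological_space \<Rightarrow> 'g) \<Rightarrow> ('g \<Rightarrow> 'g) \<Rightarrow> bool" where
  "strict_comparison_compact_open s r \<longleftrightarrow> (\<forall>U V.
     openin (top_of_set (unit_space s)) U \<longrightarrow> compact U \<longrightarrow>
     openin (top_of_set (unit_space s)) V \<longrightarrow> compact V \<longrightarrow>
     (\<forall>\<mu> \<in> invariant_measures s r. measure \<mu> U < measure \<mu> V) \<longrightarrow> subequiv s r U V)"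

end

(* Only the implication from comparison for compact opens is substantial. Given a compact
   K \<subseteq> U with \<mu>(U) < \<mu>(V) for all invariant \<mu>, enlarge K to a compact open K' \<subseteq> U; it suffices
   to find a compact open W \<subseteq> V with \<mu>(K') < \<mu>(W) for all invariant \<mu>. If there were none, pick
   for each compact open W \<subseteq> V an invariant \<mu>\<^sub>W with \<mu>\<^sub>W(W) \<le> \<mu>\<^sub>W(K'). A cluster point of the
   set functions \<mu>\<^sub>W along W directed by inclusion is a finitely additive invariant probability
   content on the compact opens of the unit space. The unit space is compact and second countable
   with a basis of compact opens, so this content extends to a regular invariant Borel probability
   measure N, and N(V) = sup N(W) \<le> N(K') < N(V). *)

theory Submission
  imports Defs
begin

lemma compact_metrizable_imp_second_countable:
  assumes "metrizable_space T" "compact_space T"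
  shows "second_countable T"
proof -
  obtain M d where "Metric_space M d" and T: "T = Metric_space.mtopology M d"
    using assms(1) unfolding metrizable_space_def by blast
  interpret Metric_space M d by fact
  have "mtotally_bounded M"
    using assms(2) T compactin_imp_mtotally_bounded by (simp add: compact_space_def)
  moreover have "(0::real) < 1 / Suc n" for n by simp
  ultimately have "\<exists>F. finite F \<and> F \<subseteq> M \<and> M \<subseteq> (\<Union>x\<in>F. mball x (1 / Suc n))" for n
    unfolding mtotally_bounded_def by blast
  then obtain F where F: "\<And>n. finite (F n)" "\<And>n. F n \<subseteq> M"
      "\<And>n. M \<subseteq> (\<Union>x\<in>F n. mball x (1 / Suc n))"
    by (meson someI_ex)
  define \<B> where "\<B> = (\<Union>n. (\<lambda>x. mball x (1 / Suc n)) ` F n)"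
  have "countable \<B>"
    unfolding \<B>_def by (rule countable_UN) (auto simp: F(1) countable_finite)
  moreover have "\<exists>V\<in>\<B>. x \<in> V \<and> V \<subseteq> U" if U: "openin mtopology U" "x \<in> U" for U x
  proof -
    obtain e where e: "e > 0" "mball x e \<subseteq> U"
      using U openin_mtopology by metis
    obtain n where n: "2 / Suc n < e"
    proof -
      obtain n where "inverse (real (Suc n)) < e / 2"
        using reals_Archimedean \<open>e > 0\<close> half_gt_zero by blast
      then show ?thesis using that[of n] by (simp add: field_simps)
    qed
    have "x \<in> M" using U openin_subset by force
    then obtain y where y: "y \<in> F n" "x \<in> mball y (1 / Suc n)" using F(3)[of n] by auto
    have "mball y (1 / Suc n) \<subseteq> mball x e"
    proof
      fix z assume z: "z \<in> mball y (1 / Suc n)"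
      have "d x z \<le> d x y + d y z" using y z by (auto intro: triangle)
      also have "\<dots> < 2 / Suc n" using y z by (auto simp: commute)
      finally show "z \<in> mball x e" using z \<open>x \<in> M\<close> n by auto
    qed
    then show ?thesis using y e unfolding \<B>_def by blast
  qed
  moreover have "\<forall>V\<in>\<B>. openin mtopology V" unfolding \<B>_def by auto
  ultimately show ?thesis unfolding second_countable_def T by blast
qed

lemma (in finite_measure) measure_UN_minus_initial_segment_less:
  fixes A :: "nat \<Rightarrow> 'a set"
  assumes "range A \<subseteq> sets M" "e > 0"
  obtains n where "measure M ((\<Union>i. A i) - (\<Union>i<n. A i)) < e"
proof -
  have "(\<lambda>n. measure M (\<Union>i<n. A i)) \<longlonglongrightarrow> measure M (\<Union>n. \<Union>i<n. A i)"
    by (rule finite_Lim_measure_incseq)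
      (use assms(1) in \<open>auto simp: incseq_def, meson lessThan_iff less_le_trans\<close>)
  moreover have "(\<Union>n. \<Union>i<n. A i) = (\<Union>i. A i)" by blast
  ultimately have "(\<lambda>n. measure M (\<Union>i<n. A i)) \<longlonglongrightarrow> measure M (\<Union>i. A i)" by simp
  then obtain n where "\<bar>measure M (\<Union>i<n. A i) - measure M (\<Union>i. A i)\<bar> < e"
    using LIMSEQ_D[OF _ assms(2)] by (metis order_refl real_norm_def)
  moreover have "measure M ((\<Union>i. A i) - (\<Union>i<n. A i)) = measure M (\<Union>i. A i) - measure M (\<Union>i<n. A i)"
    using assms(1) by (intro finite_measure_Diff) auto
  ultimately have "measure M ((\<Union>i. A i) - (\<Union>i<n. A i)) < e" by (simp add: abs_less_iff)
  then show ?thesis by (rule that)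
qed

lemma (in finite_measure) measure_UN_le_geometric:
  fixes A :: "nat \<Rightarrow> 'a set"
  assumes "range A \<subseteq> sets M" "\<And>i. measure M (A i) \<le> c * (1 / 2) ^ i"
  shows "measure M (\<Union>i. A i) \<le> 2 * c"
proof -
  have "summable (\<lambda>i. c * (1 / 2) ^ i :: real)" by (intro summable_mult summable_geometric) auto
  moreover from this have "summable (\<lambda>i. measure M (A i))"
    by (rule summable_comparison_test') (use assms(2) in auto)
  ultimately have "measure M (\<Union>i. A i) \<le> (\<Sum>i. c * (1 / 2) ^ i)"
    using assms by (intro order_trans[OF finite_measure_subadditive_countably suminf_le]) auto
  also have "\<dots> = 2 * c" by (subst suminf_mult) (auto simp: suminf_geometric)
  finally show ?thesis .
qed

lemma directed_family_cluster_point: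
  fixes f :: "'i::order \<Rightarrow> 'a \<Rightarrow> real"
  assumes bounded: "\<And>x a. x \<in> D \<Longrightarrow> f x a \<in> {0..1}"
    and directed: "\<And>F. finite F \<Longrightarrow> F \<subseteq> D \<Longrightarrow> \<exists>y\<in>D. \<forall>x\<in>F. x \<le> y"
  shows "\<exists>\<nu>. \<forall>x\<in>D. \<nu> \<in> closure (f ` {y \<in> D. x \<le> y})"
proof -
  define Q where "Q = Pi\<^sub>E UNIV (\<lambda>_::'a. {0..1::real})"
  define tail where "tail x = closure (f ` {y \<in> D. x \<le> y})" for x
  have "compactin (product_topology (\<lambda>_. euclidean) UNIV) Q"
    unfolding Q_def by (simp add: compactin_PiE)
  then have "compact Q" by (simp add: euclidean_product_topology)
  then have "Q \<inter> (\<Inter>x\<in>D. tail x) \<noteq> {}"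
  proof (rule compact_imp_fip_image)
    show "closed (tail x)" for x by (simp add: tail_def)
    fix I assume "finite I" "I \<subseteq> D"
    then obtain y where y: "y \<in> D" "\<forall>x\<in>I. x \<le> y" using directed by blast
    then have "f y \<in> Q" using bounded unfolding Q_def by (auto simp: PiE_UNIV_domain)
    moreover have "f y \<in> tail x" if "x \<in> I" for x
    proof -
      have "f y \<in> f ` {y' \<in> D. x \<le> y'}" using y that by (intro imageI) auto
      then show ?thesis unfolding tail_def by (rule closure_subset[THEN subsetD])
    qed
    ultimately have "f y \<in> Q \<inter> (\<Inter>x\<in>I. tail x)" by blast
    then show "Q \<inter> (\<Inter>x\<in>I. tail x) \<noteq> {}" by blast
  qed
  then show ?thesis unfolding tail_def by blast
qed

lemma precedes_mono:
  assumes "precedes s r K' W" "K \<subseteq> K'" "W \<subseteq> V"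
  shows "precedes s r K V"
proof -
  obtain n :: nat and A :: "nat \<Rightarrow> 'a set" where A: "\<forall>j<n. open_bisection s r (A j)"
      "K' \<subseteq> (\<Union>j<n. s ` A j)" "\<forall>j<n. r ` A j \<subseteq> W"
      "\<forall>j<n. \<forall>k<n. j \<noteq> k \<longrightarrow> r ` A j \<inter> r ` A k = {}"
    using assms(1) unfolding precedes_def by (elim exE conjE) simp
  moreover have "K \<subseteq> (\<Union>j<n. s ` A j)" using A(2) assms(2) by blast
  moreover have "\<forall>j<n. r ` A j \<subseteq> V" using A(3) assms(3) by blast
  ultimately show ?thesis
    unfolding precedes_def by (intro exI[of _ n] exI[of _ A]) simp
qed

lemma etale_imp_open_unit_space:
  assumes "groupoid s r m i" "etale s r"
  shows "open (unit_space s)"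
  unfolding open_subopen[of "unit_space s"]
proof
  fix x assume "x \<in> unit_space s"
  then have "s x = x"
    using assms(1) unfolding unit_space_def groupoid_def by auto
  obtain U where "open U" "x \<in> U" "open (s ` U)"
    using assms(2) unfolding etale_def by blast
  moreover have "s ` U \<subseteq> unit_space s" unfolding unit_space_def by blast
  ultimately show "\<exists>T. open T \<and> x \<in> T \<and> T \<subseteq> unit_space s"
    using \<open>s x = x\<close> by (metis image_eqI)
qed

section \<open>Compact open subsets of the unit space\<close>

locale ample_unit_space =
  fixes s r :: "'g::t2_space \<Rightarrow> 'g"
  assumes continuous_s: "continuous_on UNIV s" and continuous_r: "continuous_on UNIV r"
    and open_units: "open (unit_space s)" and compact_units: "compact (unit_space s)"
    and compact_open_basis:
      "\<And>W x. open (W :: 'g set) \<Longrightarrow> x \<in> W \<Longrightarrow> \<exists>C. compact C \<and> open C \<and> x \<in> C \<and> C \<subseteq> W"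
    and second_countable_units: "second_countable (top_of_set (unit_space s))"
begin

abbreviation "X \<equiv> unit_space s"

definition compact_opens :: "'g set set" where
  "compact_opens = {C. C \<subseteq> X \<and> open C \<and> compact C}"

lemma compact_opens_Un: "A \<in> compact_opens \<Longrightarrow> B \<in> compact_opens \<Longrightarrow> A \<union> B \<in> compact_opens"
  by (auto simp: compact_opens_def compact_Un)

lemma compact_opens_Int: "A \<in> compact_opens \<Longrightarrow> B \<in> compact_opens \<Longrightarrow> A \<inter> B \<in> compact_opens"
  by (auto simp: compact_opens_def compact_Int)

lemma compact_opens_Diff: "A \<in> compact_opens \<Longrightarrow> B \<in> compact_opens \<Longrightarrow> A - B \<in> compact_opens"
  by (auto simp: compact_opens_def compact_imp_closed open_Diff compact_diff)

lemma compact_opens_Union: "finite S \<Longrightarrow> S \<subseteq> compact_opens \<Longrightarrow> \<Union>S \<in> compact_opens"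
  by (induction S rule: finite_induct) (auto simp: compact_opens_def compact_Un)

lemma units_in_compact_opens: "X \<in> compact_opens"
  using open_units compact_units by (auto simp: compact_opens_def)

lemma ring_of_sets_compact_opens: "ring_of_sets X compact_opens"
proof (rule ring_of_setsI)
  show "compact_opens \<subseteq> Pow X" "{} \<in> compact_opens"
    by (auto simp: compact_opens_def)
qed (simp_all add: compact_opens_Un compact_opens_Diff)

lemma countable_subcover_in_units:
  assumes "open W" "W \<subseteq> X" "\<And>U. U \<in> \<U> \<Longrightarrow> open U" "\<Union>\<U> = W"
  obtains \<V> where "countable \<V>" "\<V> \<subseteq> \<U>" "\<Union>\<V> = W"
proof -
  have "second_countable (subtopology (top_of_set X) W)"
    by (rule second_countable_subtopology[OF second_countable_units])
  then have "Lindelof_space (top_of_set W)"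
    using assms(2) by (simp add: subtopology_subtopology Int_absorb1 second_countable_imp_Lindelof_space)
  moreover have "\<And>U. U \<in> \<U> \<Longrightarrow> openin (top_of_set W) U"
    using assms(3,4) by (auto simp: openin_open_eq assms(1))
  ultimately show ?thesis
    using Lindelof_spaceD[of "top_of_set W" \<U>] assms(4) that by auto
qed

lemma compact_opens_cover_open:
  assumes "open W" "W \<subseteq> X"
  shows "\<Union>{C \<in> compact_opens. C \<subseteq> W} = W"
proof -
  have "x \<in> \<Union>{C \<in> compact_opens. C \<subseteq> W}" if "x \<in> W" for x
    using compact_open_basis[OF assms(1) that] assms(2) unfolding compact_opens_def by blast
  then show ?thesis by blast
qed

lemma countable_compact_opens_cover:
  assumes "open W" "W \<subseteq> X"
  obtains \<C> where "countable \<C>" "\<C> \<subseteq> compact_opens" "\<Union>\<C> = W"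
proof -
  let ?\<U> = "{C \<in> compact_opens. C \<subseteq> W}"
  have "\<And>U. U \<in> ?\<U> \<Longrightarrow> open U" by (simp add: compact_opens_def)
  then obtain \<C> where "countable \<C>" "\<C> \<subseteq> ?\<U>" "\<Union>\<C> = W"
    by (rule countable_subcover_in_units[OF assms _ compact_opens_cover_open[OF assms]])
  then show ?thesis using that by blast
qed

lemma compact_opens_exhaust_open:
  assumes "open W" "W \<subseteq> X"
  obtains C where "\<And>n. C n \<in> compact_opens" "incseq C" "(\<Union>n. C n) = W"
proof -
  obtain \<C> where \<C>: "countable \<C>" "\<C> \<subseteq> compact_opens" "\<Union>\<C> = W"
    using countable_compact_opens_cover[OF assms] .
  define f where "f = from_nat_into (insert {} \<C>)"
  have f: "range f = insert {} \<C>"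
    unfolding f_def using \<C>(1) by (intro range_from_nat_into) auto
  have f_in: "f i \<in> compact_opens" for i
  proof -
    have "f i \<in> insert {} \<C>" using f by blast
    then show ?thesis using \<C>(2) by (auto simp: compact_opens_def)
  qed
  show ?thesis
  proof
    show "(\<Union>i<n. f i) \<in> compact_opens" for n
      using f_in by (intro compact_opens_Union) auto
    show "incseq (\<lambda>n. \<Union>i<n. f i)"
      unfolding incseq_def by (intro allI impI UN_mono) auto
    have "(\<Union>n. \<Union>i<n. f i) = \<Union>(range f)" by blast
    then show "(\<Union>n. \<Union>i<n. f i) = W" using f \<C>(3) by simp
  qed
qed

lemma compact_open_between:
  assumes "compact K" "open U" "K \<subseteq> U" "U \<subseteq> X"
  obtains K' where "K' \<in> compact_opens" "K \<subseteq> K'" "K' \<subseteq> U"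
proof -
  have "K \<subseteq> \<Union>{C \<in> compact_opens. C \<subseteq> U}"
    using compact_opens_cover_open[OF assms(2,4)] assms(3) by simp
  then obtain \<T> where \<T>: "\<T> \<subseteq> {C \<in> compact_opens. C \<subseteq> U}" "finite \<T>" "K \<subseteq> \<Union>\<T>"
    by (rule compactE[OF assms(1)]) (auto simp: compact_opens_def)
  then have "\<Union>\<T> \<in> compact_opens" by (intro compact_opens_Union) auto
  then show ?thesis using that \<T> by blast
qed

lemma sets_restrict_borel_units_eq:
  "sets (restrict_space borel X) = sigma_sets X compact_opens"
proof -
  have "sets (restrict_space borel X) = (\<inter>) X ` sigma_sets UNIV {S. open S}"
    by (simp add: sets_restrict_space sets_borel)
  also have "\<dots> = sigma_sets X ((\<inter>) X ` {S. open S})"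
    by (rule sigma_sets_Int) (auto intro: sigma_sets.Basic open_units)
  also have "\<dots> = sigma_sets X compact_opens"
  proof (rule sigma_sets_eqI)
    fix a assume "a \<in> (\<inter>) X ` {S. open S}"
    then have "open a" "a \<subseteq> X" using open_units by auto
    then obtain C :: "nat \<Rightarrow> 'g set" where C: "\<And>n. C n \<in> compact_opens" "(\<Union>n. C n) = a"
      using compact_opens_exhaust_open[OF \<open>open a\<close> \<open>a \<subseteq> X\<close>] by blast
    have "(\<Union>n. C n) \<in> sigma_sets X compact_opens"
      using C(1) by (intro sigma_sets.Union sigma_sets.Basic)
    then show "a \<in> sigma_sets X compact_opens" using C(2) by simp
  next
    fix b assume "b \<in> compact_opens"
    then show "b \<in> sigma_sets X ((\<inter>) X ` {S. open S})"
      by (intro sigma_sets.Basic) (auto simp: compact_opens_def)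
  qed
  finally show ?thesis .
qed

lemma open_in_units_measurable:
  "sets N = sets (restrict_space borel X) \<Longrightarrow> open C \<Longrightarrow> C \<subseteq> X \<Longrightarrow> C \<in> sets N"
  by (auto simp: sets_restrict_space intro!: image_eqI[of _ _ C])

lemma compact_in_units_measurable:
  "sets N = sets (restrict_space borel X) \<Longrightarrow> compact C \<Longrightarrow> C \<subseteq> X \<Longrightarrow> C \<in> sets N"
  by (auto simp: sets_restrict_space compact_imp_closed intro!: image_eqI[of _ _ C])

lemma compact_opens_measurable:
  "sets N = sets (restrict_space borel X) \<Longrightarrow> C \<in> compact_opens \<Longrightarrow> C \<in> sets N"
  by (simp add: compact_opens_def open_in_units_measurable)

section \<open>Regularity and extension of contents\<close>

definition approximable :: "'g measure \<Rightarrow> 'g set \<Rightarrow> bool" where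
  "approximable N A \<longleftrightarrow> (\<forall>e>0. \<exists>C W. compact C \<and> open W \<and> C \<subseteq> A \<and> A \<subseteq> W \<and> W \<subseteq> X \<and>
     measure N (W - C) < e)"

lemma approximable_compact_open: "A \<in> compact_opens \<Longrightarrow> approximable N A"
  unfolding approximable_def compact_opens_def by (intro allI impI exI[of _ A]) auto

lemma approximable_units_Diff:
  assumes "approximable N A"
  shows "approximable N (X - A)"
  unfolding approximable_def
proof (intro allI impI)
  fix e :: real assume "e > 0"
  then obtain C W where CW: "compact C" "open W" "C \<subseteq> A" "A \<subseteq> W" "W \<subseteq> X" "measure N (W - C) < e"
    using assms unfolding approximable_def by metis
  have "compact (X - W)" using compact_units CW(2) by (rule compact_diff)
  moreover have "open (X - C)" using open_units CW(1) by (simp add: open_Diff compact_imp_closed)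
  moreover have "(X - C) - (X - W) = W - C" using CW(5) by blast
  ultimately show "\<exists>C W. compact C \<and> open W \<and> C \<subseteq> X - A \<and> X - A \<subseteq> W \<and> W \<subseteq> X \<and>
      measure N (W - C) < e"
    using CW by (metis Diff_mono Diff_subset order_refl)
qed

lemma approximable_UN:
  fixes A :: "nat \<Rightarrow> 'g set"
  assumes N: "prob_space N" "sets N = sets (restrict_space borel X)"
    and A: "\<And>i. approximable N (A i)"
  shows "approximable N (\<Union>i. A i)"
  unfolding approximable_def
proof (intro allI impI)
  interpret prob_space N by (rule N(1))
  fix e :: real assume "e > 0"
  define d where "d i = e / 4 * (1 / 2) ^ i" for i :: nat
  have "d i > 0" for i using \<open>e > 0\<close> by (simp add: d_def)
  then have "\<exists>C W. compact C \<and> open W \<and> C \<subseteq> A i \<and> A i \<subseteq> W \<and> W \<subseteq> X \<and> measure N (W - C) < d i"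
    for i using A unfolding approximable_def by blast
  then obtain C W where CW: "\<And>i. compact (C i)" "\<And>i. open (W i)" "\<And>i. C i \<subseteq> A i"
      "\<And>i. A i \<subseteq> W i" "\<And>i. W i \<subseteq> X" "\<And>i. measure N (W i - C i) < d i"
    by metis
  have C_sets: "C i \<in> sets N" for i
    using CW by (intro compact_in_units_measurable[OF N(2)]) blast+
  have WC_sets: "W i - C i \<in> sets N" for i
    using C_sets CW(2,5) open_in_units_measurable[OF N(2)] by blast
  obtain n where n: "measure N ((\<Union>i. C i) - (\<Union>i<n. C i)) < e / 2"
    using measure_UN_minus_initial_segment_less[of C "e / 2"] C_sets \<open>e > 0\<close> by auto
  have WC: "measure N (\<Union>i. W i - C i) \<le> e / 2"
    using measure_UN_le_geometric[of "\<lambda>i. W i - C i" "e / 4"] WC_sets CW(6) less_imp_le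
    by (auto simp: d_def)
  have "(\<Union>i. W i) - (\<Union>i<n. C i) \<subseteq> (\<Union>i. W i - C i) \<union> ((\<Union>i. C i) - (\<Union>i<n. C i))"
    by blast
  then have "measure N ((\<Union>i. W i) - (\<Union>i<n. C i))
      \<le> measure N ((\<Union>i. W i - C i) \<union> ((\<Union>i. C i) - (\<Union>i<n. C i)))"
    using WC_sets C_sets by (intro finite_measure_mono) auto
  also have "\<dots> \<le> measure N (\<Union>i. W i - C i) + measure N ((\<Union>i. C i) - (\<Union>i<n. C i))"
    using WC_sets C_sets by (intro measure_subadditive) auto
  finally have "measure N ((\<Union>i. W i) - (\<Union>i<n. C i)) < e" using WC n by simp
  moreover have "compact (\<Union>i<n. C i)" using CW(1) by (intro compact_UN) auto
  moreover have "open (\<Union>i. W i)" using CW(2) by auto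
  moreover have "(\<Union>i<n. C i) \<subseteq> (\<Union>i. A i)" "(\<Union>i. A i) \<subseteq> (\<Union>i. W i)" "(\<Union>i. W i) \<subseteq> X"
    using CW(3-5) by blast+
  ultimately show "\<exists>C W. compact C \<and> open W \<and> C \<subseteq> (\<Union>i. A i) \<and> (\<Union>i. A i) \<subseteq> W \<and> W \<subseteq> X \<and>
      measure N (W - C) < e"
    by blast
qed

lemma approximable_measurable:
  assumes N: "prob_space N" "sets N = sets (restrict_space borel X)" and "A \<in> sets N"
  shows "approximable N A"
proof -
  have "Int_stable compact_opens" "compact_opens \<subseteq> Pow X"
    by (auto simp: Int_stable_def compact_opens_Int compact_opens_def)
  moreover have "A \<in> sigma_sets X compact_opens"
    using assms(3) N(2) sets_restrict_borel_units_eq by simp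
  ultimately show ?thesis
  proof (induction rule: sigma_sets_induct_disjoint)
    case (basic A)
    then show ?case by (rule approximable_compact_open)
  next
    case empty
    then show ?case by (simp add: approximable_compact_open compact_opens_def)
  next
    case (compl A)
    show ?case by (rule approximable_units_Diff[OF compl(2)])
  next
    case (union A)
    show ?case by (rule approximable_UN[OF N union(3)])
  qed
qed

lemma measure_between_compact_and_open:
  assumes N: "prob_space N" "sets N = sets (restrict_space borel X)"
    and A: "A \<in> sets N" and "e > 0"
  obtains C W where "compact C" "C \<subseteq> A" "measure N A \<le> measure N C + e"
    "open W" "A \<subseteq> W" "W \<subseteq> X" "measure N W \<le> measure N A + e"
proof -
  interpret prob_space N by (rule N(1))
  obtain C W where CW: "compact C" "open W" "C \<subseteq> A" "A \<subseteq> W" "W \<subseteq> X" "measure N (W - C) < e"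
    using approximable_measurable[OF N A] \<open>e > 0\<close> unfolding approximable_def by metis
  have "C \<in> sets N" "W \<in> sets N"
    using CW compact_in_units_measurable[OF N(2)] open_in_units_measurable[OF N(2)] by blast+
  then have "measure N (W - C) = measure N W - measure N C"
    using CW by (intro finite_measure_Diff) auto
  moreover have "measure N C \<le> measure N A" "measure N A \<le> measure N W"
    using CW A \<open>W \<in> sets N\<close> by (auto intro: finite_measure_mono)
  ultimately show ?thesis using that CW by simp
qed

lemma regular_borel_prob_units:
  assumes N: "prob_space N" "space N = X" "sets N = sets (restrict_space borel X)"
  shows "regular_borel_prob X N"
  unfolding regular_borel_prob_def
proof (intro conjI ballI N)
  interpret prob_space N by (rule N(1))
  fix A assume A: "A \<in> sets N"
  let ?opens = "{U. openin (top_of_set X) U \<and> A \<subseteq> U}"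
  show "emeasure N A = (INF U \<in> ?opens. emeasure N U)"
  proof (rule antisym)
    show "emeasure N A \<le> (INF U \<in> ?opens. emeasure N U)"
      using open_units open_in_units_measurable[OF N(3)]
      by (intro INF_greatest emeasure_mono) (auto simp: openin_open_eq)
    show "(INF U \<in> ?opens. emeasure N U) \<le> emeasure N A"
    proof (rule ennreal_le_epsilon)
      fix e :: real assume "0 < e"
      then obtain W where W: "open W" "A \<subseteq> W" "W \<subseteq> X" "measure N W \<le> measure N A + e"
        using measure_between_compact_and_open[OF N(1,3) A] by metis
      have "(INF U \<in> ?opens. emeasure N U) \<le> emeasure N W"
        using W open_units by (intro INF_lower) (auto simp: openin_open_eq)
      also have "\<dots> \<le> ennreal (measure N A + e)"
        using W(4) by (simp add: emeasure_eq_measure ennreal_leI)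
      also have "\<dots> = emeasure N A + ennreal e"
        using \<open>0 < e\<close> by (simp add: emeasure_eq_measure ennreal_plus)
      finally show "(INF U \<in> ?opens. emeasure N U) \<le> emeasure N A + ennreal e" .
    qed
  qed
  let ?compacts = "{K. compact K \<and> K \<subseteq> A}"
  show "emeasure N A = (SUP K \<in> ?compacts. emeasure N K)"
  proof (rule antisym)
    show "(SUP K \<in> ?compacts. emeasure N K) \<le> emeasure N A"
      using A by (intro SUP_least emeasure_mono) auto
    show "emeasure N A \<le> (SUP K \<in> ?compacts. emeasure N K)"
    proof (rule ennreal_le_epsilon)
      fix e :: real assume "0 < e"
      then obtain C where C: "compact C" "C \<subseteq> A" "measure N A \<le> measure N C + e"
        using measure_between_compact_and_open[OF N(1,3) A] by metis
      have "emeasure N A \<le> ennreal (measure N C + e)"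
        using C(3) by (simp add: emeasure_eq_measure ennreal_leI)
      also have "\<dots> = emeasure N C + ennreal e"
        using \<open>0 < e\<close> by (simp add: emeasure_eq_measure ennreal_plus)
      also have "\<dots> \<le> (SUP K \<in> ?compacts. emeasure N K) + ennreal e"
        using C by (intro add_right_mono SUP_upper) auto
      finally show "emeasure N A \<le> (SUP K \<in> ?compacts. emeasure N K) + ennreal e" .
    qed
  qed
qed

text \<open>A countable disjoint union of compact opens that is itself compact open has only
  finitely many nonempty members, so additivity on compact opens is already countable additivity.\<close>
lemma countably_additive_compact_opens:
  assumes "positive compact_opens f" "additive compact_opens f"
  shows "countably_additive compact_opens f"
  unfolding countably_additive_def
proof (intro allI impI)
  interpret ring_of_sets X compact_opens by (rule ring_of_sets_compact_opens)
  fix A :: "nat \<Rightarrow> 'g set"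
  assume A: "range A \<subseteq> compact_opens" "disjoint_family A" "(\<Union>i. A i) \<in> compact_opens"
  have "compact (\<Union>i. A i)" using A(3) by (simp add: compact_opens_def)
  then obtain I where I: "finite I" "(\<Union>i. A i) \<subseteq> (\<Union>i\<in>I. A i)"
    by (rule compactE_image[of _ UNIV A]) (use A(1) in \<open>auto simp: compact_opens_def\<close>)
  obtain n where "I \<subseteq> {..<n}" using finite_nat_bounded[OF I(1)] by blast
  then have cover: "(\<Union>i. A i) = (\<Union>i<n. A i)" using I(2) by blast
  have "A j = {}" if "n \<le> j" for j
  proof -
    have "A j \<inter> A i = {}" if "i < n" for i
      using A(2) \<open>n \<le> j\<close> that unfolding disjoint_family_on_def by auto
    then show ?thesis using cover by blast
  qed
  then have "(\<Sum>i. f (A i)) = (\<Sum>i<n. f (A i))"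
    using assms(1) by (intro suminf_finite) (auto simp: positive_def)
  also have "\<dots> = f (\<Union>i<n. A i)"
    using A by (intro additive_sum[OF assms]) (auto simp: disjoint_family_on_def)
  finally show "(\<Sum>i. f (A i)) = f (\<Union>i. A i)" using cover by simp
qed

lemma prob_measure_from_content:
  fixes \<nu> :: "'g set \<Rightarrow> real"
  assumes nonneg: "\<And>C. C \<in> compact_opens \<Longrightarrow> \<nu> C \<ge> 0"
    and additive: "\<And>A B. A \<in> compact_opens \<Longrightarrow> B \<in> compact_opens \<Longrightarrow> A \<inter> B = {} \<Longrightarrow>
      \<nu> (A \<union> B) = \<nu> A + \<nu> B"
    and total: "\<nu> X = 1"
  obtains N where "prob_space N" "space N = X" "sets N = sets (restrict_space borel X)"
    "\<And>C. C \<in> compact_opens \<Longrightarrow> measure N C = \<nu> C"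
proof -
  interpret ring_of_sets X compact_opens by (rule ring_of_sets_compact_opens)
  define f where "f C = ennreal (\<nu> C)" for C
  have "\<nu> {} = 0"
    using additive[of "{}" "{}"] by (simp add: compact_opens_def)
  then have "positive compact_opens f" by (simp add: positive_def f_def)
  moreover have "additive compact_opens f"
    using additive nonneg by (simp add: additive_def f_def ennreal_plus)
  ultimately obtain \<mu> where \<mu>: "\<forall>C\<in>compact_opens. \<mu> C = f C"
      "measure_space X (sigma_sets X compact_opens) \<mu>"
    using caratheodory' countably_additive_compact_opens by metis
  define N where "N = measure_of X compact_opens \<mu>"
  have space_N: "space N = X" unfolding N_def by (rule space_measure_of_conv)
  have sets_N: "sets N = sigma_sets X compact_opens"
    unfolding N_def using space_closed by (simp add: sets_measure_of_conv)
  have emeasure_N: "emeasure N C = ennreal (\<nu> C)" if "C \<in> compact_opens" for C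
    using that \<mu> unfolding N_def f_def by (simp add: emeasure_measure_of_conv sigma_sets.Basic)
  have "prob_space N"
    by (rule prob_spaceI) (simp add: space_N emeasure_N units_in_compact_opens total)
  moreover have "measure N C = \<nu> C" if "C \<in> compact_opens" for C
    using emeasure_N[OF that] nonneg[OF that] by (simp add: measure_def)
  ultimately show ?thesis
    using that space_N sets_N sets_restrict_borel_units_eq by simp
qed

section \<open>Invariance is decided on compact open bisections\<close>

definition unit_chart :: "('g \<Rightarrow> 'g) \<Rightarrow> 'g set \<Rightarrow> bool" where
  "unit_chart t B \<longleftrightarrow> open B \<and> openin (top_of_set X) (t ` B) \<and>
     homeomorphic_map (top_of_set B) (top_of_set (t ` B)) t"

lemma bisection_iff_unit_charts:
  "bisection s r U \<longleftrightarrow> (\<exists>B. unit_chart s B \<and> unit_chart r B \<and> U \<subseteq> B)"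
  unfolding bisection_def unit_chart_def by blast

lemma unit_chart_inj_on: "unit_chart t B \<Longrightarrow> inj_on t B"
  unfolding unit_chart_def using homeomorphic_imp_injective_map by fastforce

lemma unit_chart_image_open:
  assumes "unit_chart t B" "open E" "E \<subseteq> B"
  shows "open (t ` E)" "t ` E \<subseteq> X"
proof -
  have B: "open B" "openin (top_of_set X) (t ` B)"
      "homeomorphic_map (top_of_set B) (top_of_set (t ` B)) t"
    using assms(1) unfolding unit_chart_def by auto
  have tB: "open (t ` B)" "t ` B \<subseteq> X" using B(2) open_units by (auto simp: openin_open_eq)
  have "openin (top_of_set B) E" using assms(2,3) B(1) by (simp add: openin_open_eq)
  then have "openin (top_of_set (t ` B)) (t ` E)"
    using homeomorphic_imp_open_map[OF B(3)] unfolding open_map_def by blast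
  then show "open (t ` E)" using tB(1) by (simp add: openin_open_eq)
  show "t ` E \<subseteq> X" using assms(3) tB(2) by blast
qed

lemma unit_chart_compact_image_iff:
  assumes "unit_chart t B" "A \<subseteq> B"
  shows "compact (t ` A) \<longleftrightarrow> compact A"
proof -
  have "homeomorphic_map (top_of_set B) (top_of_set (t ` B)) t"
    using assms(1) by (simp add: unit_chart_def)
  from homeomorphic_map_compactness[OF this] assms(2)
  show ?thesis by (simp add: compactin_subtopology image_mono)
qed

lemma unit_chart_image_compact_open:
  assumes "unit_chart t B" "compact A" "open A" "A \<subseteq> B"
  shows "t ` A \<in> compact_opens"
  using unit_chart_image_open[OF assms(1,3,4)] unit_chart_compact_image_iff[OF assms(1,4)] assms(2)
  by (simp add: compact_opens_def)

lemma unit_chart_image_measurable: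
  assumes "unit_chart t B" "sets N = sets (restrict_space borel X)" "E \<in> sets borel" "E \<subseteq> B"
  shows "t ` E \<in> sets N"
proof -
  have "open B" using assms(1) by (simp add: unit_chart_def)
  have "E \<in> (\<inter>) B ` sigma_sets UNIV {S. open S}"
    using assms(3,4) sets_borel by (auto intro!: image_eqI[of _ _ E])
  also have "\<dots> = sigma_sets B ((\<inter>) B ` {S. open S})"
    by (rule sigma_sets_Int) (use \<open>open B\<close> in auto)
  finally have E: "E \<in> sigma_sets B ((\<inter>) B ` {S. open S})" .
  have "(\<inter>) B ` {S. open S} \<subseteq> Pow B" by auto
  from E show ?thesis
  proof (induction rule: sigma_sets.induct)
    case (Basic a)
    then have "open a" "a \<subseteq> B" using \<open>open B\<close> by auto
    then show ?case
      using unit_chart_image_open[OF assms(1)] open_in_units_measurable[OF assms(2)] by simp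
  next
    case Empty
    then show ?case by simp
  next
    case (Compl a)
    have "a \<subseteq> B" using sigma_sets_into_sp[OF \<open>_ \<subseteq> Pow B\<close> Compl(1)] .
    then have "t ` (B - a) = t ` B - t ` a"
      using unit_chart_inj_on[OF assms(1)] by (auto simp: inj_on_def)
    moreover have "t ` B \<in> sets N"
      using unit_chart_image_open[OF assms(1) \<open>open B\<close> order_refl]
        open_in_units_measurable[OF assms(2)] by simp
    ultimately show ?case using Compl(2) by auto
  next
    case (Union a)
    then show ?case by (simp add: image_UN sets.countable_UN)
  qed
qed

lemma unit_chart_compact_open_exhaustion:
  assumes "unit_chart t B" "continuous_on UNIV t"
  obtains A where "\<And>n. compact (A n)" "\<And>n. open (A n)" "\<And>n. A n \<subseteq> B" "incseq A" "(\<Union>n. A n) = B"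
proof -
  have "open B" using assms(1) by (simp add: unit_chart_def)
  obtain C :: "nat \<Rightarrow> 'g set" where C: "\<And>n. C n \<in> compact_opens" "incseq C" "(\<Union>n. C n) = t ` B"
    using compact_opens_exhaust_open[OF unit_chart_image_open[OF assms(1) \<open>open B\<close> order_refl]]
    by blast
  define A where "A n = B \<inter> t -` C n" for n
  have "t ` A n = C n" for n
  proof
    show "t ` A n \<subseteq> C n" unfolding A_def by blast
    show "C n \<subseteq> t ` A n"
    proof
      fix y assume "y \<in> C n"
      then obtain x where "x \<in> B" "y = t x" using C(3) by blast
      then show "y \<in> t ` A n" using \<open>y \<in> C n\<close> unfolding A_def by blast
    qed
  qed
  have A_sub: "A n \<subseteq> B" for n by (simp add: A_def)
  show ?thesis
  proof
    show "A n \<subseteq> B" for n by (rule A_sub)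
    have "compact (t ` A n)" for n
      using C(1)[of n] \<open>t ` A n = C n\<close> by (simp add: compact_opens_def)
    then show "compact (A n)" for n
      using unit_chart_compact_image_iff[OF assms(1) A_sub] by simp
    show "open (A n)" for n
      using C(1)[of n] \<open>open B\<close> open_vimage[OF _ assms(2)] unfolding A_def compact_opens_def by blast
    show "incseq A" using C(2) unfolding incseq_def A_def by blast
    show "(\<Union>n. A n) = B" using C(3) unfolding A_def by blast
  qed
qed

lemma open_bisection_in_charts:
  "unit_chart s B \<Longrightarrow> unit_chart r B \<Longrightarrow> open A \<Longrightarrow> A \<subseteq> B \<Longrightarrow> open_bisection s r A"
  unfolding open_bisection_def bisection_iff_unit_charts by blast

lemma compact_open_source_restriction:
  assumes "compact A" "open A" "C \<in> compact_opens"
  shows "compact (A \<inter> s -` C)" "open (A \<inter> s -` C)"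
proof -
  have "closed C" "open C" using assms(3) by (auto simp: compact_opens_def compact_imp_closed)
  then show "compact (A \<inter> s -` C)" "open (A \<inter> s -` C)"
    using assms(1,2) continuous_s by (auto intro: compact_Int_closed closed_vimage open_vimage)
qed

lemma emeasure_transport_sigma_sets:
  assumes N: "prob_space N" "sets N = sets (restrict_space borel X)"
    and inv: "\<And>A. compact A \<Longrightarrow> open_bisection s r A \<Longrightarrow> measure N (s ` A) = measure N (r ` A)"
    and B: "unit_chart s B" "unit_chart r B"
    and A: "compact A" "open A" "A \<subseteq> B"
    and F: "F \<in> sigma_sets (s ` A) {C \<in> compact_opens. C \<subseteq> s ` A}"
  shows "F \<in> sets N \<and> r ` (A \<inter> s -` F) \<in> sets N \<and> emeasure N (r ` (A \<inter> s -` F)) = emeasure N F"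
proof -
  interpret prob_space N by (rule N(1))
  let ?G = "{C \<in> compact_opens. C \<subseteq> s ` A}"
  define T where "T F = r ` (A \<inter> s -` F)" for F
  have inj_r: "inj_on r A" using unit_chart_inj_on[OF B(2)] A(3) inj_on_subset by blast
  have sA: "s ` A \<in> compact_opens" "r ` A \<in> compact_opens"
    using unit_chart_image_compact_open[OF _ A] B by auto
  have "Int_stable ?G" "?G \<subseteq> Pow (s ` A)"
    by (auto simp: Int_stable_def compact_opens_Int)
  from this F show ?thesis
    unfolding T_def[symmetric]
  proof (induction rule: sigma_sets_induct_disjoint)
    case (basic C)
    then have C: "C \<in> compact_opens" "C \<subseteq> s ` A" by auto
    define A' where "A' = A \<inter> s -` C"
    have "compact A'" "open A'" "A' \<subseteq> B"
      using compact_open_source_restriction[OF A(1,2) C(1)] A(3) by (auto simp: A'_def)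
    then have "open_bisection s r A'" "r ` A' \<in> compact_opens"
      using open_bisection_in_charts[OF B] unit_chart_image_compact_open[OF B(2)] by auto
    moreover have "s ` A' = C" unfolding A'_def using C(2) by auto
    ultimately show ?case
      using inv[OF \<open>compact A'\<close>] C(1) compact_opens_measurable[OF N(2)]
      by (simp add: T_def A'_def[symmetric] emeasure_eq_measure)
  next
    case empty
    then show ?case by (simp add: T_def)
  next
    case (compl F)
    have "F \<subseteq> s ` A" using sigma_sets_into_sp[OF \<open>?G \<subseteq> Pow (s ` A)\<close> compl(1)] .
    have "A \<inter> s -` (s ` A - F) = A - (A \<inter> s -` F)" by auto
    then have T_compl: "T (s ` A - F) = r ` A - T F"
      unfolding T_def using inj_r by (simp add: inj_on_image_set_diff)
    have "T F \<subseteq> r ` A" unfolding T_def by auto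
    have "open_bisection s r A" using open_bisection_in_charts[OF B A(2,3)] .
    have sA_sets: "s ` A \<in> sets N" "r ` A \<in> sets N"
      using compact_opens_measurable[OF N(2)] sA by auto
    have "emeasure N (T (s ` A - F)) = emeasure N (r ` A) - emeasure N (T F)"
      unfolding T_compl using compl(2) sA_sets \<open>T F \<subseteq> r ` A\<close> by (intro emeasure_Diff) auto
    also have "\<dots> = emeasure N (s ` A) - emeasure N F"
      using compl(2) inv[OF A(1) \<open>open_bisection s r A\<close>] by (simp add: T_def emeasure_eq_measure)
    also have "\<dots> = emeasure N (s ` A - F)"
      using compl(2) sA_sets \<open>F \<subseteq> s ` A\<close> by (intro emeasure_Diff[symmetric]) auto
    finally show ?case using compl(2) sA_sets T_compl by auto
  next
    case (union F)
    have T_UN: "T (\<Union>i. F i) = (\<Union>i. T (F i))" unfolding T_def by auto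
    have "disjoint_family (\<lambda>i. T (F i))"
      using union(1) inj_r unfolding disjoint_family_on_def T_def inj_on_def by blast
    moreover have "range F \<subseteq> sets N" "range (\<lambda>i. T (F i)) \<subseteq> sets N" using union(3) by auto
    ultimately have "emeasure N (T (\<Union>i. F i)) = emeasure N (\<Union>i. F i)"
      using union(1,3) unfolding T_UN by (simp add: suminf_emeasure[symmetric])
    then show ?case using \<open>range F \<subseteq> sets N\<close> \<open>range (\<lambda>i. T (F i)) \<subseteq> sets N\<close> T_UN by auto
  qed
qed

lemma emeasure_image_eq_within_compact_open:
  assumes N: "prob_space N" "sets N = sets (restrict_space borel X)"
    and inv: "\<And>A. compact A \<Longrightarrow> open_bisection s r A \<Longrightarrow> measure N (s ` A) = measure N (r ` A)"
    and B: "unit_chart s B" "unit_chart r B"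
    and A: "compact A" "open A" "A \<subseteq> B"
    and E: "E \<in> sets borel" "E \<subseteq> A"
  shows "emeasure N (r ` E) = emeasure N (s ` E)"
proof -
  have sA: "s ` A \<in> compact_opens" by (rule unit_chart_image_compact_open[OF B(1) A])
  then have sA_sigma: "s ` A \<in> sigma_sets X compact_opens" by blast
  have "s ` E \<in> sets N"
    using E A by (intro unit_chart_image_measurable[OF B(1) N(2) E(1)]) auto
  then have "s ` E \<in> (\<inter>) (s ` A) ` sigma_sets X compact_opens"
    using N(2) sets_restrict_borel_units_eq E(2) by (auto intro!: image_eqI[of _ _ "s ` E"])
  also have "\<dots> = sigma_sets (s ` A) ((\<inter>) (s ` A) ` compact_opens)"
    using sA_sigma sA by (intro sigma_sets_Int) (auto simp: compact_opens_def)
  also have "\<dots> \<subseteq> sigma_sets (s ` A) {C \<in> compact_opens. C \<subseteq> s ` A}"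
    using sA compact_opens_Int by (intro sigma_sets_subseteq) blast
  finally have "emeasure N (r ` (A \<inter> s -` s ` E)) = emeasure N (s ` E)"
    using emeasure_transport_sigma_sets[OF N inv B A] by blast
  moreover have "A \<inter> s -` s ` E = E"
    using E(2) A(3) unit_chart_inj_on[OF B(1)] unfolding inj_on_def by blast
  ultimately show ?thesis by simp
qed

lemma invariant_measuresI:
  assumes N: "prob_space N" "space N = X" "sets N = sets (restrict_space borel X)"
    and inv: "\<And>A. compact A \<Longrightarrow> open_bisection s r A \<Longrightarrow> measure N (s ` A) = measure N (r ` A)"
  shows "N \<in> invariant_measures s r"
proof -
  have "measure N (s ` U) = measure N (r ` U)" if U: "U \<in> sets borel" "bisection s r U" for U
  proof -
    obtain B where B: "unit_chart s B" "unit_chart r B" "U \<subseteq> B"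
      using U(2) bisection_iff_unit_charts by blast
    obtain A :: "nat \<Rightarrow> 'g set" where A: "\<And>n. compact (A n)" "\<And>n. open (A n)" "\<And>n. A n \<subseteq> B"
        "incseq A" "(\<Union>n. A n) = B"
      using unit_chart_compact_open_exhaustion[OF B(1) continuous_s] by blast
    define E where "E n = U \<inter> A n" for n
    have E: "E n \<in> sets borel" "E n \<subseteq> A n" "E n \<subseteq> B" for n
      using U(1) A(2,3) by (auto simp: E_def)
    have "incseq E" using A(4) by (auto simp: incseq_def E_def)
    have UN_E: "(\<Union>n. E n) = U" using A(5) B(3) by (auto simp: E_def)
    have "emeasure N (t ` U) = (SUP n. emeasure N (t ` E n))" if "unit_chart t B" for t
    proof -
      have "range (\<lambda>n. t ` E n) \<subseteq> sets N"
        using unit_chart_image_measurable[OF that N(3) E(1,3)] by auto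
      moreover have "incseq (\<lambda>n. t ` E n)"
        using \<open>incseq E\<close> by (auto simp: incseq_def intro: image_mono)
      moreover have "(\<Union>n. t ` E n) = t ` U" using UN_E by blast
      ultimately show ?thesis using SUP_emeasure_incseq[of "\<lambda>n. t ` E n" N] by simp
    qed
    moreover have "emeasure N (r ` E n) = emeasure N (s ` E n)" for n
      by (rule emeasure_image_eq_within_compact_open[OF N(1,3) inv B(1,2) A(1-3) E(1,2)])
    ultimately have "emeasure N (s ` U) = emeasure N (r ` U)" using B by simp
    then show ?thesis by (simp add: measure_def)
  qed
  then show ?thesis
    unfolding invariant_measures_def using regular_borel_prob_units[OF N] by blast
qed

lemma compact_open_bisection_images:
  assumes "compact A" "open_bisection s r A"
  shows "s ` A \<in> compact_opens" "r ` A \<in> compact_opens"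
proof -
  obtain B where "unit_chart s B" "unit_chart r B" "A \<subseteq> B"
    using assms(2) bisection_iff_unit_charts by (auto simp: open_bisection_def)
  then show "s ` A \<in> compact_opens" "r ` A \<in> compact_opens"
    using assms unit_chart_image_compact_open by (auto simp: open_bisection_def)
qed

lemma measure_open_le_if_compact_opens_le:
  assumes N: "prob_space N" "sets N = sets (restrict_space borel X)"
    and V: "open V" "V \<subseteq> X"
    and le: "\<And>W. W \<in> compact_opens \<Longrightarrow> W \<subseteq> V \<Longrightarrow> measure N W \<le> c"
  shows "measure N V \<le> c"
proof -
  interpret prob_space N by (rule N(1))
  obtain C :: "nat \<Rightarrow> 'g set" where C: "\<And>n. C n \<in> compact_opens" "incseq C" "(\<Union>n. C n) = V"
    using compact_opens_exhaust_open[OF V] by blast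
  have "(\<lambda>n. measure N (C n)) \<longlonglongrightarrow> measure N (\<Union>n. C n)"
    using C(1,2) compact_opens_measurable[OF N(2)] by (intro finite_Lim_measure_incseq) auto
  then show ?thesis
    using le C by (intro LIMSEQ_le_const2) auto
qed

section \<open>Approximation from inside by compact opens\<close>

lemma invariant_measuresD:
  assumes "\<mu> \<in> invariant_measures s r"
  shows "prob_space \<mu>" "space \<mu> = X" "sets \<mu> = sets (restrict_space borel X)"
    "\<And>U. U \<in> sets borel \<Longrightarrow> bisection s r U \<Longrightarrow> measure \<mu> (s ` U) = measure \<mu> (r ` U)"
  using assms unfolding invariant_measures_def regular_borel_prob_def by auto

lemma limit_of_invariant_measures:
  assumes "\<nu> \<in> closure (measure ` invariant_measures s r)"
  obtains N where "N \<in> invariant_measures s r" "\<And>C. C \<in> compact_opens \<Longrightarrow> measure N C = \<nu> C"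
proof -
  let ?M = "invariant_measures s r"
  have limit: "\<nu> \<in> S" if "closed S" "\<And>\<mu>. \<mu> \<in> ?M \<Longrightarrow> measure \<mu> \<in> S" for S
    using assms closure_minimal[of "measure ` ?M" S] that by blast
  note \<mu> = invariant_measuresD
  note coordinate = continuous_on_product_coordinates
  have nonneg: "\<nu> C \<ge> 0" for C
    by (rule limit[of "{g. 0 \<le> g C}", simplified]) (intro closed_Collect_le continuous_on_const coordinate)
  have additive: "\<nu> (A \<union> B) = \<nu> A + \<nu> B"
    if "A \<in> compact_opens" "B \<in> compact_opens" "A \<inter> B = {}" for A B
  proof (rule limit[of "{g. g (A \<union> B) = g A + g B}", simplified])
    show "closed {g :: 'g set \<Rightarrow> real. g (A \<union> B) = g A + g B}"
      by (intro closed_Collect_eq continuous_on_add coordinate)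
    fix \<mu> assume "\<mu> \<in> ?M"
    interpret prob_space \<mu> by (rule \<mu>(1)[OF \<open>\<mu> \<in> ?M\<close>])
    show "measure \<mu> (A \<union> B) = measure \<mu> A + measure \<mu> B"
      using that compact_opens_measurable[OF \<mu>(3)[OF \<open>\<mu> \<in> ?M\<close>]] by (simp add: finite_measure_Union)
  qed
  have total: "\<nu> X = 1"
  proof (rule limit[of "{g. g X = 1}", simplified])
    show "closed {g :: 'g set \<Rightarrow> real. g X = 1}"
      by (intro closed_Collect_eq continuous_on_const coordinate)
    show "measure \<mu> X = 1" if "\<mu> \<in> ?M" for \<mu>
      using prob_space.prob_space[OF \<mu>(1)[OF that]] \<mu>(2)[OF that] by simp
  qed
  have invariant: "\<nu> (s ` A) = \<nu> (r ` A)" if "open_bisection s r A" for A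
  proof (rule limit[of "{g. g (s ` A) = g (r ` A)}", simplified])
    show "closed {g :: 'g set \<Rightarrow> real. g (s ` A) = g (r ` A)}"
      by (intro closed_Collect_eq coordinate)
    show "measure \<mu> (s ` A) = measure \<mu> (r ` A)" if "\<mu> \<in> ?M" for \<mu>
      using \<mu>(4)[OF that] \<open>open_bisection s r A\<close> by (simp add: open_bisection_def)
  qed
  obtain N where N: "prob_space N" "space N = X" "sets N = sets (restrict_space borel X)"
      "\<And>C. C \<in> compact_opens \<Longrightarrow> measure N C = \<nu> C"
    using prob_measure_from_content[of \<nu>] nonneg additive total by blast
  have "N \<in> ?M"
    using N invariant compact_open_bisection_images by (intro invariant_measuresI) auto
  then show ?thesis using that N(4) by blast
qed

lemma compact_open_inside_strictly_larger:
  assumes K: "K \<in> compact_opens" and V: "open V" "V \<subseteq> X"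
    and less: "\<forall>\<mu>\<in>invariant_measures s r. measure \<mu> K < measure \<mu> V"
  shows "\<exists>W\<in>compact_opens. W \<subseteq> V \<and> (\<forall>\<mu>\<in>invariant_measures s r. measure \<mu> K < measure \<mu> W)"
proof (rule ccontr)
  let ?M = "invariant_measures s r"
  define D where "D = {W \<in> compact_opens. W \<subseteq> V}"
  assume "\<not> ?thesis"
  then have "\<exists>\<mu>\<in>?M. measure \<mu> W \<le> measure \<mu> K" if "W \<in> D" for W
    using that unfolding D_def by (auto simp: not_less)
  then obtain \<mu> where \<mu>: "\<And>W. W \<in> D \<Longrightarrow> \<mu> W \<in> ?M" "\<And>W. W \<in> D \<Longrightarrow> measure (\<mu> W) W \<le> measure (\<mu> W) K"
    by metis
  have "measure (\<mu> W) C \<in> {0..1}" if "W \<in> D" for W C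
    using prob_space.prob_le_1[OF invariant_measuresD(1)[OF \<mu>(1)[OF that]]] by simp
  moreover have "\<exists>y\<in>D. \<forall>x\<in>F. x \<subseteq> y" if "finite F" "F \<subseteq> D" for F
    using that compact_opens_Union[of F] unfolding D_def by (intro bexI[of _ "\<Union>F"]) auto
  ultimately have "\<exists>\<nu>. \<forall>x\<in>D. \<nu> \<in> closure ((\<lambda>W. measure (\<mu> W)) ` {y \<in> D. x \<subseteq> y})"
    by (rule directed_family_cluster_point)
  then obtain \<nu> where \<nu>: "\<forall>x\<in>D. \<nu> \<in> closure ((\<lambda>W. measure (\<mu> W)) ` {y \<in> D. x \<subseteq> y})" ..
  have "{} \<in> D" by (simp add: D_def compact_opens_def)
  have "(\<lambda>W. measure (\<mu> W)) ` {y \<in> D. {} \<subseteq> y} \<subseteq> measure ` ?M" using \<mu>(1) by blast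
  then have "\<nu> \<in> closure (measure ` ?M)" using \<nu> \<open>{} \<in> D\<close> closure_mono by blast
  then obtain N where N: "N \<in> ?M" "\<And>C. C \<in> compact_opens \<Longrightarrow> measure N C = \<nu> C"
    using limit_of_invariant_measures by blast
  have "\<nu> W \<le> \<nu> K" if "W \<in> D" for W
  proof -
    have "measure (\<mu> W') W \<le> measure (\<mu> W') K" if "W' \<in> D" "W \<subseteq> W'" for W'
    proof -
      interpret prob_space "\<mu> W'" by (rule invariant_measuresD(1)[OF \<mu>(1)[OF \<open>W' \<in> D\<close>]])
      have "measure (\<mu> W') W \<le> measure (\<mu> W') W'"
        using that compact_opens_measurable[OF invariant_measuresD(3)[OF \<mu>(1)]] unfolding D_def
        by (intro finite_measure_mono) auto
      also have "\<dots> \<le> measure (\<mu> W') K" by (rule \<mu>(2)[OF \<open>W' \<in> D\<close>])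
      finally show ?thesis .
    qed
    then have "closure ((\<lambda>W. measure (\<mu> W)) ` {y \<in> D. W \<subseteq> y}) \<subseteq> {g. g W \<le> g K}"
      by (intro closure_minimal closed_Collect_le continuous_on_product_coordinates) auto
    then show ?thesis using \<nu> that by blast
  qed
  then have "measure N V \<le> measure N K"
    using N K invariant_measuresD[OF N(1)]
    by (intro measure_open_le_if_compact_opens_le[OF _ _ V]) (auto simp: D_def)
  then show False using less N(1) by fastforce
qed

lemma strict_comparison_if_compact_open:
  assumes "strict_comparison_compact_open s r"
  shows "strict_comparison s r"
  unfolding strict_comparison_def subequiv_def
proof (intro allI impI)
  let ?M = "invariant_measures s r"
  fix U V K
  assume "openin (top_of_set X) U" "openin (top_of_set X) V"
    and less: "\<forall>\<mu>\<in>?M. measure \<mu> U < measure \<mu> V" and K: "compact K" "K \<subseteq> U"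
  then have U: "open U" "U \<subseteq> X" and V: "open V" "V \<subseteq> X"
    using open_units by (auto simp: openin_open_eq)
  obtain K' where K': "K' \<in> compact_opens" "K \<subseteq> K'" "K' \<subseteq> U"
    using compact_open_between[OF K(1) U(1) K(2) U(2)] .
  have "measure \<mu> K' < measure \<mu> V" if "\<mu> \<in> ?M" for \<mu>
  proof -
    interpret prob_space \<mu> by (rule invariant_measuresD(1)[OF that])
    have "measure \<mu> K' \<le> measure \<mu> U"
      using K'(3) open_in_units_measurable[OF invariant_measuresD(3)[OF that] U]
      by (rule finite_measure_mono)
    then show ?thesis using less that by fastforce
  qed
  then obtain W where W: "W \<in> compact_opens" "W \<subseteq> V" "\<forall>\<mu>\<in>?M. measure \<mu> K' < measure \<mu> W"
    using compact_open_inside_strictly_larger[OF K'(1) V] by blast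
  then have "subequiv s r K' W"
    using K'(1) assms open_units
    by (auto simp: strict_comparison_compact_open_def compact_opens_def openin_open_eq)
  then have "precedes s r K' W"
    using K'(1) by (simp add: subequiv_def compact_opens_def)
  then show "precedes s r K V" using K'(2) W(2) by (rule precedes_mono)
qed

end

theorem proposition5p5:
  fixes s r :: "'g::t2_space \<Rightarrow> 'g" and m :: "'g \<Rightarrow> 'g \<Rightarrow> 'g" and i :: "'g \<Rightarrow> 'g"
  assumes "topological_groupoid s r m i"
    and "locally_compact_space (euclidean :: 'g topology)"
    and "etale s r"
    and "ample s r"
    and "compact (unit_space s)"
    and "metrizable_space (top_of_set (unit_space s))"
  shows "strict_comparison s r \<longleftrightarrow> strict_comparison_compact_open s r"
proof
  assume "strict_comparison s r"
  then show "strict_comparison_compact_open s r"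
    unfolding strict_comparison_def strict_comparison_compact_open_def by blast
next
  assume "strict_comparison_compact_open s r"
  moreover have "ample_unit_space s r"
  proof
    show "continuous_on UNIV s" "continuous_on UNIV r"
      using assms(1) by (auto simp: topological_groupoid_def)
    show "open (unit_space s)"
      using assms(1,3) etale_imp_open_unit_space by (auto simp: topological_groupoid_def)
    show "compact (unit_space s)" by (fact assms(5))
    show "\<exists>C. compact C \<and> open C \<and> x \<in> C \<and> C \<subseteq> W" if "open W" "x \<in> W" for W :: "'g set" and x
      using assms(4) that unfolding ample_def open_bisection_def by blast
    show "second_countable (top_of_set (unit_space s))"
      using assms(5)
      by (intro compact_metrizable_imp_second_countable[OF assms(6)] compact_space_subtopology) simp
  qed
  ultimately show "strict_comparison s r"
    by (rule ample_unit_space.strict_comparison_if_compact_open[rotated])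
qed

end
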